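(* Let $p<q$ be coprime positive integers and $m$ a positive integer. Let $A=\mathbb C[X_0,\dots,X_4]$, graded by $\mathbb Z\times\mathbb Z/m\mathbb Z$ with $X_0$ of degree $(1,0)$, $X_1,X_2$ of degree $(-p,-1)$, $X_3,X_4$ of degree $(q,1)$, and for $s\in\mathbb C$ let $I_s=(X_0^{q-p}-X_1X_4,\;X_2,\;X_3,\;s-X_0^{mp}X_1^{m})$. Then $\dim(A/I_1)_{(n,d)}\ge 1$ and $\dim(A/I_0)_{(n,d)}\ge 1$ for all $(n,d)\in\mathbb Z\times\mathbb Z/m\mathbb Z$.
   Context: The grading is the weight grading for the action of $G_0\times G_m$ ($G_0\cong\mathbb C^*$, $G_m\cong\mu_m$) on $\mathbb C^5$ given by $t\cdot(x_0,\dots,x_4)=(tx_0,t^{-p}x_1,t^{-p}x_2,t^qx_3,t^qx_4)$ and $\zeta\cdot(x_0,\dots,x_4)=(x_0,\zeta^{-1}x_1,\zeta^{-1}x_2,\zeta x_3,\zeta x_4)$. *)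

theory Defs
  imports Complex_Main "HOL-Library.Poly_Mapping" "HOL-Library.Numeral_Type"
begin

text \<open>The polynomial ring A = C[X_0,...,X_4]: finitely supported maps from
  monomials (exponent vectors indexed by the 5-element type) to complex coefficients.\<close>

type_synonym mon5 = "5 \<Rightarrow>\<^sub>0 nat"
type_synonym poly5 = "mon5 \<Rightarrow>\<^sub>0 complex"

definition Var :: "5 \<Rightarrow> poly5" where
  "Var i = Poly_Mapping.single (Poly_Mapping.single i 1) 1"

definition const5 :: "complex \<Rightarrow> poly5" where
  "const5 c = Poly_Mapping.single 0 c"

definition zdeg :: "nat \<Rightarrow> nat \<Rightarrow> mon5 \<Rightarrow> int" where
  "zdeg p q a = int (Poly_Mapping.lookup a (0::5)) - int p * int (Poly_Mapping.lookup a 1 + Poly_Mapping.lookup a 2)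
                 + int q * int (Poly_Mapping.lookup a 3 + Poly_Mapping.lookup a 4)"

definition mdeg :: "mon5 \<Rightarrow> int" where
  "mdeg a = int (Poly_Mapping.lookup a 3 + Poly_Mapping.lookup a 4) - int (Poly_Mapping.lookup a 1 + Poly_Mapping.lookup a 2)"

definition homogeneous_of :: "nat \<Rightarrow> nat \<Rightarrow> nat \<Rightarrow> int \<Rightarrow> int \<Rightarrow> poly5 \<Rightarrow> bool" where
  "homogeneous_of p q m n d f \<longleftrightarrow>
     (\<forall>a \<in> Poly_Mapping.keys f. zdeg p q a = n \<and> mdeg a mod int m = d mod int m)"

definition gen_ideal :: "'a::comm_ring_1 list \<Rightarrow> 'a set" where
  "gen_ideal gs = {(\<Sum>i<length gs. cs ! i * gs ! i) | cs. length cs = length gs}"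

definition I_s :: "nat \<Rightarrow> nat \<Rightarrow> nat \<Rightarrow> complex \<Rightarrow> poly5 set" where
  "I_s p q m s = gen_ideal
     [Var 0 ^ (q - p) - Var 1 * Var 4, Var 2, Var 3,
      const5 s - Var 0 ^ (m * p) * Var 1 ^ m]"

text \<open>The graded piece (A/I)_(n,d) = A_(n,d) / (I \<inter> A_(n,d)) (I is homogeneous), as the set of
  cosets f + I of homogeneous f of degree (n,d). Its dimension is \<ge> 1 iff it contains a
  coset other than the zero coset I.\<close>
definition quot_piece :: "nat \<Rightarrow> nat \<Rightarrow> nat \<Rightarrow> poly5 set \<Rightarrow> int \<Rightarrow> int \<Rightarrow> poly5 set set" where
  "quot_piece p q m I n d = {{f + g | g. g \<in> I} | f. homogeneous_of p q m n d f}"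

definition quot_piece_nonzero :: "nat \<Rightarrow> nat \<Rightarrow> nat \<Rightarrow> poly5 set \<Rightarrow> int \<Rightarrow> int \<Rightarrow> bool" where
  "quot_piece_nonzero p q m I n d \<longleftrightarrow> (\<exists>C \<in> quot_piece p q m I n d. C \<noteq> I)"

end

theory Submission
  imports Defs "HOL-Computational_Algebra.Polynomial"
begin

text \<open>Every degree (n, d) contains a monomial X_0^a X_1^b X_4^c, found by division with
  remainder. Substituting univariate polynomials for the variables is a ring homomorphism
  into C[t], so a polynomial lies outside I_s as soon as some substitution sends all
  generators of I_s, but not the polynomial, into a principal ideal of C[t]. For I_1 the
  point (1,1,0,0,1) kills every generator but no monomial in X_0, X_1, X_4. For I_0 the
  substitution X_0 = t, X_1 = t^\<beta>, X_4 = t^(q-p-\<beta>), X_2 = X_3 = 0 maps every generator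
  into (t^(m(p+\<beta>))) and the monomial to t^(a+\<beta>b+(q-p-\<beta>)c); with \<beta> = 0 or \<beta> = q-p
  this exponent is small enough for a suitable monomial of each degree.\<close>

definition subst_monomial :: "(5 \<Rightarrow> complex poly) \<Rightarrow> mon5 \<Rightarrow> complex poly" where
  "subst_monomial v a = (\<Prod>i\<in>UNIV. v i ^ Poly_Mapping.lookup a i)"

definition subst_poly5 :: "(5 \<Rightarrow> complex poly) \<Rightarrow> poly5 \<Rightarrow> complex poly" where
  "subst_poly5 v f =
     (\<Sum>a\<in>Poly_Mapping.keys f. smult (Poly_Mapping.lookup f a) (subst_monomial v a))"

lemma subst_monomial_add: "subst_monomial v (a + b) = subst_monomial v a * subst_monomial v b"
  by (simp add: subst_monomial_def lookup_add power_add prod.distrib)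

lemma subst_monomial_0 [simp]: "subst_monomial v 0 = 1"
  by (simp add: subst_monomial_def)

lemma subst_poly5_0 [simp]: "subst_poly5 v 0 = 0"
  by (simp add: subst_poly5_def)

lemma subst_poly5_add: "subst_poly5 v (f + g) = subst_poly5 v f + subst_poly5 v g"
  unfolding subst_poly5_def by (rule setsum_keys_plus_distrib) (simp_all add: smult_add_left)

lemma subst_poly5_diff: "subst_poly5 v (f - g) = subst_poly5 v f - subst_poly5 v g"
  using subst_poly5_add[of v "f - g" g] by simp

lemma subst_poly5_sum: "subst_poly5 v (sum F A) = (\<Sum>x\<in>A. subst_poly5 v (F x))"
  by (induction A rule: infinite_finite_induct) (simp_all add: subst_poly5_add)

lemma subst_poly5_single:
  "subst_poly5 v (Poly_Mapping.single a c) = smult c (subst_monomial v a)"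
  by (cases "c = 0") (simp_all add: subst_poly5_def)

lemma poly5_eq_sum_single:
  "f = (\<Sum>a\<in>Poly_Mapping.keys f. Poly_Mapping.single a (Poly_Mapping.lookup f a))"
  by (rule poly_mapping_eqI) (auto simp: lookup_sum lookup_single when_def in_keys_iff)

lemma subst_poly5_mult: "subst_poly5 v (f * g) = subst_poly5 v f * subst_poly5 v g"
proof -
  let ?F = "Poly_Mapping.keys f" and ?G = "Poly_Mapping.keys g"
  have "f * g = (\<Sum>a\<in>?F. \<Sum>b\<in>?G.
          Poly_Mapping.single (a + b) (Poly_Mapping.lookup f a * Poly_Mapping.lookup g b))"
    by (subst poly5_eq_sum_single, subst (2) poly5_eq_sum_single)
       (simp add: sum_product mult_single)
  then have "subst_poly5 v (f * g) = (\<Sum>a\<in>?F. \<Sum>b\<in>?G.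
          smult (Poly_Mapping.lookup f a * Poly_Mapping.lookup g b)
                (subst_monomial v a * subst_monomial v b))"
    by (simp add: subst_poly5_sum subst_poly5_single subst_monomial_add)
  also have "\<dots> = subst_poly5 v f * subst_poly5 v g"
    by (simp add: subst_poly5_def sum_product mult_smult_left mult_smult_right mult.commute)
  finally show ?thesis .
qed

lemma subst_poly5_1 [simp]: "subst_poly5 v 1 = 1"
  using subst_poly5_single[of v 0 1] by simp

lemma subst_poly5_power: "subst_poly5 v (f ^ k) = subst_poly5 v f ^ k"
  by (induction k) (simp_all add: subst_poly5_mult)

lemma subst_poly5_Var [simp]: "subst_poly5 v (Var i) = v i"
proof -
  have "v j ^ Poly_Mapping.lookup (Poly_Mapping.single i 1) j = (if j = i then v i else 1)" for j
    by (simp add: lookup_single when_def)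
  then show ?thesis
    by (simp add: Var_def subst_poly5_single subst_monomial_def)
qed

lemma subst_poly5_const5 [simp]: "subst_poly5 v (const5 c) = [:c:]"
  by (simp add: const5_def subst_poly5_single)

lemma zero_in_gen_ideal: "0 \<in> gen_ideal gs"
  unfolding gen_ideal_def by (rule CollectI, rule exI[of _ "replicate (length gs) 0"]) simp

lemma notin_gen_ideal_by_subst:
  assumes "\<forall>g\<in>set gs. r dvd subst_poly5 v g" "\<not> r dvd subst_poly5 v f"
  shows "f \<notin> gen_ideal gs"
proof
  assume "f \<in> gen_ideal gs"
  then obtain cs where f: "f = (\<Sum>i<length gs. cs ! i * gs ! i)"
    by (auto simp: gen_ideal_def)
  have "r dvd subst_poly5 v f"
    unfolding f subst_poly5_sum subst_poly5_mult by (rule dvd_sum) (use assms(1) in auto)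
  with assms(2) show False ..
qed

lemma Var_power: "Var i ^ k = Poly_Mapping.single (Poly_Mapping.single i k) 1"
  by (induction k) (simp_all add: Var_def mult_single flip: single_add)

lemma homogeneous_of_monomial:
  assumes "int a - int p * int b + int q * int c = n"
    and "(int c - int b) mod int m = d mod int m"
  shows "homogeneous_of p q m n d (Var 0 ^ a * Var 1 ^ b * Var 4 ^ c)"
proof -
  have "Var 0 ^ a * Var 1 ^ b * Var 4 ^ c = Poly_Mapping.single
          (Poly_Mapping.single 0 a + Poly_Mapping.single 1 b + Poly_Mapping.single 4 c) 1"
    by (simp add: Var_power mult_single)
  then show ?thesis
    using assms by (simp add: homogeneous_of_def zdeg_def mdeg_def lookup_add lookup_single)
qed

lemma monomial_notin_I1: "Var 0 ^ a * Var 1 ^ b * Var 4 ^ c \<notin> I_s p q m 1"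
proof -
  define v :: "5 \<Rightarrow> complex poly" where "v i = (if i = 2 \<or> i = 3 then 0 else 1)" for i
  show ?thesis
    unfolding I_s_def
    by (rule notin_gen_ideal_by_subst[where v = v and r = 0])
       (simp_all add: v_def subst_poly5_diff subst_poly5_mult subst_poly5_power)
qed

lemma monomial_notin_I0:
  assumes "\<beta> \<le> q - p" "a + \<beta> * b + (q - p - \<beta>) * c < m * (p + \<beta>)"
  shows "Var 0 ^ a * Var 1 ^ b * Var 4 ^ c \<notin> I_s p q m 0"
proof -
  define t :: "complex poly" where "t = [:0, 1:]"
  define v :: "5 \<Rightarrow> complex poly" where
    "v i = (if i = 0 then t else if i = 1 then t ^ \<beta> else if i = 4 then t ^ (q - p - \<beta>) else 0)"
    for i
  have t_power_dvd_iff: "t ^ k dvd t ^ l \<longleftrightarrow> k \<le> l" for k l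
    by (subst dvd_power_iff) (simp_all add: t_def is_unit_iff_degree)
  have "subst_poly5 v (Var 0 ^ a * Var 1 ^ b * Var 4 ^ c) = t ^ (a + \<beta> * b + (q - p - \<beta>) * c)"
    by (simp add: v_def subst_poly5_mult subst_poly5_power power_add mult.commute flip: power_mult)
  moreover have "subst_poly5 v (Var 0 ^ (q - p) - Var 1 * Var 4) = 0"
    using assms(1) le_add_diff_inverse[OF assms(1)] by (simp add: v_def subst_poly5_diff subst_poly5_mult subst_poly5_power
                                 flip: power_add)
  moreover have "subst_poly5 v (const5 0 - Var 0 ^ (m * p) * Var 1 ^ m) = - (t ^ (m * (p + \<beta>)))"
    by (simp add: v_def subst_poly5_diff subst_poly5_mult subst_poly5_power
                  power_add power_mult[symmetric] algebra_simps)
  ultimately show ?thesis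
    unfolding I_s_def
    by (intro notin_gen_ideal_by_subst[where v = v and r = "t ^ (m * (p + \<beta>))"])
       (use assms(2) in \<open>simp_all add: t_power_dvd_iff v_def\<close>)
qed

lemma quot_piece_nonzeroI:
  assumes "homogeneous_of p q m n d f" "f \<notin> I" "0 \<in> I"
  shows "quot_piece_nonzero p q m I n d"
proof -
  let ?C = "{f + g | g. g \<in> I}"
  have "?C \<in> quot_piece p q m I n d"
    using assms(1) by (auto simp: quot_piece_def)
  moreover have "f \<in> ?C"
    using assms(3) by force
  ultimately show ?thesis
    using assms(2) unfolding quot_piece_nonzero_def by blast
qed

lemma bounded_congruent_quotient:
  fixes k m n d :: int
  assumes "0 < k" "0 < m"
  obtains e where "e mod m = d mod m" "0 \<le> n - k * e" "n - k * e < k * m"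
proof
  let ?e = "d + m * ((n - k * d) div (k * m))"
  have "n - k * ?e = (n - k * d) mod (k * m)"
    by (simp add: algebra_simps minus_div_mult_eq_mod[symmetric])
  then show "0 \<le> n - k * ?e" "n - k * ?e < k * m"
    using assms by simp_all
  show "?e mod m = d mod m"
    by simp
qed

lemma monomial_exponents_of_degree:
  assumes "0 < p" "p < q" "0 < m"
  obtains a b c \<beta> :: nat
  where "int a - int p * int b + int q * int c = n" "(int c - int b) mod int m = d mod int m"
    and "\<beta> \<le> q - p" "a + \<beta> * b + (q - p - \<beta>) * c < m * (p + \<beta>)"
proof (cases "n \<le> 0")
  case True
  obtain e :: int where e: "e mod m = d mod m" "0 \<le> n - p * e" "n - p * e < p * m"
    using bounded_congruent_quotient[of "int p" "int m"] assms by auto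
  have "e \<le> 0"
    using e(2) True assms(1) by (smt (verit) mult_pos_pos of_nat_0_less_iff)
  show thesis
  proof (rule that[of "nat (n - p * e)" "nat (- e)" 0 0])
    show "nat (n - p * e) + 0 * nat (- e) + (q - p - 0) * 0 < m * (p + 0)"
      using e(2,3) by (simp add: nat_less_iff mult.commute)
  qed (use e \<open>e \<le> 0\<close> in simp_all)
next
  case False
  obtain e :: int where e: "e mod m = d mod m" "0 \<le> n - q * e" "n - q * e < q * m"
    using bounded_congruent_quotient[of "int q" "int m"] assms by auto
  show thesis
  proof (cases "0 \<le> e")
    case True
    show thesis
    proof (rule that[of "nat (n - q * e)" 0 "nat e" "q - p"])
      show "nat (n - q * e) + (q - p) * 0 + (q - p - (q - p)) * nat e < m * (p + (q - p))"
        using e(2,3) assms(2) by (simp add: nat_less_iff mult.commute)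
    qed (use e True in simp_all)
  next
    case False
    define a b where "a = nat (n - p * e)" and "b = nat (- e)"
    have "0 \<le> n - p * e"
      using \<open>\<not> n \<le> 0\<close> False by (smt (verit) mult_nonneg_nonpos of_nat_0_le_iff)
    then have a: "int a = n - p * e" and b: "int b = - e"
      using False by (simp_all add: a_def b_def)
    have weight: "a + (q - p) * b < m * q"
    proof -
      have "int (a + (q - p) * b) = n - q * e"
        unfolding of_nat_add of_nat_mult of_nat_diff[OF less_imp_le[OF assms(2)]] a b
        by (simp add: algebra_simps)
      also have "\<dots> < int (m * q)"
        using e(3) by (simp add: mult.commute)
      finally show ?thesis
        by (rule of_nat_less_imp_less)
    qed
    show thesis
      by (rule that[of a b 0 "q - p"]) (use e a b weight assms(2) in simp_all)
  qed
qed

theorem lemma4p6: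
  fixes p q m :: nat
  assumes "0 < p" "p < q" "coprime p q" "0 < m"
  shows "\<forall>n d :: int. quot_piece_nonzero p q m (I_s p q m 1) n d
                   \<and> quot_piece_nonzero p q m (I_s p q m 0) n d"
proof (intro allI)
  fix n d :: int
  obtain a b c \<beta> where degree: "int a - int p * int b + int q * int c = n"
      "(int c - int b) mod int m = d mod int m"
    and weight: "\<beta> \<le> q - p" "a + \<beta> * b + (q - p - \<beta>) * c < m * (p + \<beta>)"
    using monomial_exponents_of_degree[OF assms(1,2,4)] .
  have homogeneous: "homogeneous_of p q m n d (Var 0 ^ a * Var 1 ^ b * Var 4 ^ c)"
    using homogeneous_of_monomial[OF degree] .
  have zero: "0 \<in> I_s p q m s" for s
    unfolding I_s_def by (rule zero_in_gen_ideal)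
  show "quot_piece_nonzero p q m (I_s p q m 1) n d \<and> quot_piece_nonzero p q m (I_s p q m 0) n d"
    using quot_piece_nonzeroI[OF homogeneous monomial_notin_I1 zero]
      quot_piece_nonzeroI[OF homogeneous monomial_notin_I0[OF weight] zero] ..
qed

end
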